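(* For every $n\geq 0$, $$\sum_{m=0}^{2^{n}-1}x^{e(2m+1)}=H_{n+1}(x)-xH_n(x),$$ and consequently, for all integers $i,n\geq 0$ (with $e(-1,n):=0$), $$|\{m\in[0,2^{n}-1]\cap\mathbb{Z}:\;e(2m+1)=i\}|=e(i,n+1)-e(i-1,n).$$
   Context: The Stern polynomials $B_n(t)\in\mathbb{Z}[t]$ are defined by $B_0(t)=0$, $B_1(t)=1$, and for $n\geq 1$: $B_{2n}(t)=tB_n(t)$, $B_{2n+1}(t)=B_n(t)+B_{n+1}(t)$. For $n\geq1$ let $e(n)=\deg B_n(t)$. For $n\geq 0$ let $H_n(x)=\sum_{m=1}^{2^n}x^{e(m)}$, and for $i,n\geq 0$ let $e(i,n)=|\{m\in[1,2^n]\cap\mathbb{Z}:\;e(m)=i\}|$. *)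

theory Defs
  imports "HOL-Computational_Algebra.Polynomial"
begin

function stern_poly :: "nat \<Rightarrow> int poly" where
  "stern_poly n =
     (if n = 0 then 0
      else if n = 1 then 1
      else if even n then [:0, 1:] * stern_poly (n div 2)
      else stern_poly (n div 2) + stern_poly (n div 2 + 1))"
  by auto
termination
  by (relation "measure id") (auto elim!: oddE)

definition stern_e :: "nat \<Rightarrow> nat" where
  "stern_e n = degree (stern_poly n)"

definition stern_H :: "nat \<Rightarrow> 'a::comm_ring_1 \<Rightarrow> 'a" where
  "stern_H n x = (\<Sum>m = 1..2^n. x ^ stern_e m)"

definition stern_cnt :: "nat \<Rightarrow> nat \<Rightarrow> nat" where
  "stern_cnt i n = card {m \<in> {1..2^n}. stern_e m = i}"

end

theory Submission
  imports Defs
begin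

(* The recursion B_{2k} = t B_k with B_k nonzero for k >= 1 gives e(2k) = e(k) + 1.
   Splitting [1, 2^(n+1)] into the even numbers 2k (1 <= k <= 2^n) and the odd
   numbers 2k+1 (0 <= k < 2^n) splits H_{n+1}(x) into x H_n(x) plus the sum over
   odd arguments, which is the polynomial identity.  The counting identity is the
   paper's "consequently": specialise the identity to x = t in Z[t] and compare
   coefficients of t^i, since the coefficient of t^i in H_n(t) is e(i,n). *)

declare stern_poly.simps [simp del]

lemma stern_poly_pos:
  fixes x :: int
  assumes "k \<ge> 1" and "x > 0"
  shows "poly (stern_poly k) x > 0"
  using assms(1)
proof (induction k rule: less_induct)
  case (less k)
  consider "k = 1" | "k > 1" "even k" | "k > 1" "odd k"
    using less.prems by linarith
  then show ?case
  proof cases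
    case 1
    then show ?thesis by (simp add: stern_poly.simps)
  next
    case 2
    then have "poly (stern_poly k) x = x * poly (stern_poly (k div 2)) x"
      by (subst stern_poly.simps) simp
    moreover have "poly (stern_poly (k div 2)) x > 0"
      using 2 less.IH[of "k div 2"] by auto
    ultimately show ?thesis using \<open>x > 0\<close> by simp
  next
    case 3
    then have "poly (stern_poly k) x
                 = poly (stern_poly (k div 2)) x + poly (stern_poly (k div 2 + 1)) x"
      by (subst stern_poly.simps) simp
    moreover have "poly (stern_poly (k div 2)) x > 0" "poly (stern_poly (k div 2 + 1)) x > 0"
      using 3 less.IH[of "k div 2"] less.IH[of "k div 2 + 1"] by (auto elim!: oddE)
    ultimately show ?thesis by simp
  qed
qed

lemma stern_poly_nonzero: "k \<ge> 1 \<Longrightarrow> stern_poly k \<noteq> 0"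
  using stern_poly_pos[of k 1] by fastforce

text \<open>Doubling the index multiplies B_k by t, hence raises the degree by one.\<close>
lemma stern_e_double:
  assumes "k \<ge> 1"
  shows "stern_e (2 * k) = stern_e k + 1"
proof -
  have "stern_poly (2 * k) = [:0, 1:] * stern_poly k"
    using assms by (subst stern_poly.simps) simp
  then show ?thesis
    unfolding stern_e_def using stern_poly_nonzero[OF assms] by (simp add: degree_mult_eq)
qed

lemma sum_split_even_odd:
  fixes f :: "nat \<Rightarrow> 'a::comm_monoid_add"
  shows "(\<Sum>m = 1..2 * N. f m) = (\<Sum>k = 1..N. f (2 * k)) + (\<Sum>k<N. f (2 * k + 1))"
  by (induction N) (simp_all add: add.commute add.left_commute)

lemma coeff_sum_X_powers:
  assumes "finite A"
  shows "coeff (\<Sum>m\<in>A. [:0, 1:] ^ g m :: 'a::comm_ring_1 poly) i = of_nat (card {m \<in> A. g m = i})"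
proof -
  have "coeff (\<Sum>m\<in>A. [:0, 1:] ^ g m :: 'a poly) i = (\<Sum>m\<in>A. if g m = i then 1 else 0)"
    by (simp add: coeff_sum monom_altdef [of 1, simplified, symmetric] coeff_monom)
  also have "\<dots> = of_nat (card {m \<in> A. g m = i})"
    using assms by (simp add: sum.If_cases Int_def)
  finally show ?thesis .
qed

corollary coeff_stern_H_X: "coeff (stern_H n ([:0, 1:] :: int poly)) i = int (stern_cnt i n)"
  unfolding stern_H_def stern_cnt_def by (simp add: coeff_sum_X_powers)

text \<open>The generating-function identity: the even part of H_{n+1} is x H_n.\<close>
lemma stern_H_odd_part:
  fixes x :: "'a::comm_ring_1"
  shows "(\<Sum>m<2^n. x ^ stern_e (2 * m + 1)) = stern_H (n + 1) x - x * stern_H n x"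
proof -
  have "stern_H (n + 1) x
          = (\<Sum>k = 1..2^n. x ^ stern_e (2 * k)) + (\<Sum>k<2^n. x ^ stern_e (2 * k + 1))"
    unfolding stern_H_def using sum_split_even_odd[of "\<lambda>m. x ^ stern_e m" "2^n"] by simp
  also have "(\<Sum>k = 1..2^n. x ^ stern_e (2 * k)) = x * stern_H n x"
    unfolding stern_H_def sum_distrib_left by (rule sum.cong) (simp_all add: stern_e_double)
  finally show ?thesis by simp
qed

theorem mainTheorem4:
  shows "(\<forall>(n::nat) (x::'a::comm_ring_1).
            (\<Sum>m = 0..2^n - 1. x ^ stern_e (2*m+1)) = stern_H (n+1) x - x * stern_H n x)
       \<and> (\<forall>(i::nat) (n::nat).
            int (card {m \<in> {0..2^n - 1}. stern_e (2*m+1) = i})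
              = int (stern_cnt i (n+1)) - (if i = 0 then 0 else int (stern_cnt (i-1) n)))"
proof (intro conjI allI)
  have range: "{0..(2::nat)^n - 1} = {..<2^n}" for n
    using less_imp_le_nat [of 0 "2^n"] by (auto simp: less_Suc_eq_le [symmetric])
  show "(\<Sum>m = 0..2^n - 1. x ^ stern_e (2*m+1)) = stern_H (n+1) x - x * stern_H n x"
    for n and x :: 'a
    unfolding range by (rule stern_H_odd_part)
  fix i n
  let ?t = "[:0, 1:] :: int poly"
  have "int (card {m \<in> {0..2^n - 1}. stern_e (2*m+1) = i})
          = coeff (\<Sum>m = 0..2^n - 1. ?t ^ stern_e (2*m+1)) i"
    by (simp add: coeff_sum_X_powers)
  also have "\<dots> = coeff (stern_H (n+1) ?t) i - coeff (?t * stern_H n ?t) i"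
    unfolding range stern_H_odd_part by (rule coeff_diff)
  also have "\<dots> = int (stern_cnt i (n+1)) - (if i = 0 then 0 else int (stern_cnt (i-1) n))"
    by (cases i) (simp_all add: coeff_stern_H_X coeff_pCons)
  finally show "int (card {m \<in> {0..2^n - 1}. stern_e (2*m+1) = i})
              = int (stern_cnt i (n+1)) - (if i = 0 then 0 else int (stern_cnt (i-1) n))" .
qed

end
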